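(* For each finite $C$-group $(G,Y)$ there is a constant $T\in\mathbb N$ such that if $s_1,s_2\in S(G,Y)^G$ satisfy $\tau_i(s_1)\ge T$ for $i=1,\dots,m$ and $\alpha_G(s_1)=\alpha_G(s_2)$, then $s_1=s_2$.
   Context: A $C$-group is a pair $(G,Y)$, $G$ a group, $Y\subset G$ a union of finitely many conjugacy classes with $1\notin Y$, such that $G$ has a presentation with generators the elements of $Y$ and defining relations all of the form $z^{-1}yz=y'$ ($y,y',z\in Y$); it is finite if $Y$ is finite. Write $Y=C_1\sqcup\dots\sqcup C_m$ as its decomposition into conjugacy classes of $G$. The factorization semigroup $S(G,Y)$ is generated by symbols $x_y$, $y\in Y$, subject to $x_{g_1}x_{g_2}=x_{g_2}x_{g_2^{-1}g_1g_2}=x_{g_1g_2g_1^{-1}}x_{g_1}$ ($g_1,g_2\in Y$); $\alpha_G:S(G,Y)\to G$, $x_y\mapsto y$. For $s=x_{g_1}\cdots x_{g_n}$, $G_s$ is the subgroup generated by $g_1,\dots,g_n$ (independent of the expression), and $S(G,Y)^G=\{s:G_s=G\}$. $\tau_i(s)$ denotes the number of factors $x_y$ of $s$ with $y\in C_i$. *)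

theory Defs
  imports "HOL-Algebra.Algebra"
begin

text \<open>Words in the generators and their inverses: (y, True) stands for y, (y, False) for y^-1.\<close>

definition word_eval :: "('a, 'b) monoid_scheme \<Rightarrow> ('a \<times> bool) list \<Rightarrow> 'a" where
  "word_eval G w = foldr (\<lambda>(y, e) acc. (if e then y else inv\<^bsub>G\<^esub> y) \<otimes>\<^bsub>G\<^esub> acc) w \<one>\<^bsub>G\<^esub>"

inductive pres_eq :: "'a set \<Rightarrow> ('a \<times> 'a \<times> 'a) set \<Rightarrow> ('a \<times> bool) list \<Rightarrow> ('a \<times> bool) list \<Rightarrow> bool"
  for Y R where
  pres_refl: "pres_eq Y R w w"
| pres_sym: "pres_eq Y R w1 w2 \<Longrightarrow> pres_eq Y R w2 w1"
| pres_trans: "pres_eq Y R w1 w2 \<Longrightarrow> pres_eq Y R w2 w3 \<Longrightarrow> pres_eq Y R w1 w3"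
| pres_cancel: "y \<in> Y \<Longrightarrow> pres_eq Y R (u @ [(y, e), (y, \<not> e)] @ v) (u @ v)"
| pres_rel: "(y, y', z) \<in> R \<Longrightarrow>
    pres_eq Y R (u @ [(z, False), (y, True), (z, True)] @ v) (u @ [(y', True)] @ v)"

definition presents :: "('a, 'b) monoid_scheme \<Rightarrow> 'a set \<Rightarrow> ('a \<times> 'a \<times> 'a) set \<Rightarrow> bool" where
  "presents G Y R \<longleftrightarrow>
     (\<forall>g \<in> carrier G. \<exists>w \<in> lists (Y \<times> UNIV). word_eval G w = g) \<and>
     (\<forall>w1 \<in> lists (Y \<times> UNIV). \<forall>w2 \<in> lists (Y \<times> UNIV).
        word_eval G w1 = word_eval G w2 \<longleftrightarrow> pres_eq Y R w1 w2)"

definition finite_C_group :: "('a, 'b) monoid_scheme \<Rightarrow> 'a set \<Rightarrow> bool" where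
  "finite_C_group G Y \<longleftrightarrow>
     group G \<and> Y \<subseteq> carrier G \<and> finite Y \<and> \<one>\<^bsub>G\<^esub> \<notin> Y \<and>
     (\<forall>g \<in> carrier G. \<forall>y \<in> Y. inv\<^bsub>G\<^esub> g \<otimes>\<^bsub>G\<^esub> y \<otimes>\<^bsub>G\<^esub> g \<in> Y) \<and>
     (\<exists>R. R \<subseteq> {(y, y', z). y \<in> Y \<and> y' \<in> Y \<and> z \<in> Y \<and>
                              inv\<^bsub>G\<^esub> z \<otimes>\<^bsub>G\<^esub> y \<otimes>\<^bsub>G\<^esub> z = y'}
          \<and> presents G Y R)"

definition conj_class :: "('a, 'b) monoid_scheme \<Rightarrow> 'a \<Rightarrow> 'a set" where
  "conj_class G y = {inv\<^bsub>G\<^esub> g \<otimes>\<^bsub>G\<^esub> y \<otimes>\<^bsub>G\<^esub> g | g. g \<in> carrier G}"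

definition classes_of :: "('a, 'b) monoid_scheme \<Rightarrow> 'a set \<Rightarrow> 'a set set" where
  "classes_of G Y = conj_class G ` Y"

text \<open>Elements of S(G,Y) are represented by words x_{g_1} ... x_{g_n} (lists over Y);
  two words represent the same element iff related by the congruence generated by
  x_{g1} x_{g2} = x_{g2} x_{g2^-1 g1 g2} = x_{g1 g2 g1^-1} x_{g1}.\<close>

inductive hurwitz_step :: "('a, 'b) monoid_scheme \<Rightarrow> 'a list \<Rightarrow> 'a list \<Rightarrow> bool" for G where
  hs1: "hurwitz_step G (u @ [a, b] @ v) (u @ [b, inv\<^bsub>G\<^esub> b \<otimes>\<^bsub>G\<^esub> a \<otimes>\<^bsub>G\<^esub> b] @ v)"
| hs2: "hurwitz_step G (u @ [a, b] @ v) (u @ [a \<otimes>\<^bsub>G\<^esub> b \<otimes>\<^bsub>G\<^esub> inv\<^bsub>G\<^esub> a, a] @ v)"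

definition fact_eq :: "('a, 'b) monoid_scheme \<Rightarrow> 'a list \<Rightarrow> 'a list \<Rightarrow> bool" where
  "fact_eq G = equivclp (hurwitz_step G)"

definition alpha :: "('a, 'b) monoid_scheme \<Rightarrow> 'a list \<Rightarrow> 'a" where
  "alpha G w = foldr (\<lambda>y acc. y \<otimes>\<^bsub>G\<^esub> acc) w \<one>\<^bsub>G\<^esub>"

definition G_sub :: "('a, 'b) monoid_scheme \<Rightarrow> 'a list \<Rightarrow> 'a set" where
  "G_sub G w = generate G (set w)"

definition tau :: "'a set \<Rightarrow> 'a list \<Rightarrow> nat" where
  "tau C w = length (filter (\<lambda>y. y \<in> C) w)"

end

theory Submission
  imports Defs
begin

text \<open>Some power y^N of every y in Y is central in G, and accordingly x_y^N is central in
  S(G,Y). If the factors of s generate G, such a central block in front of s may be replaced by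
  x_{y'}^N for every conjugate y' of y. Now let every class occur often in s_1. Since
  alpha_G(s_1) = alpha_G(s_2) and G is presented by conjugation relations, both factorizations
  contain the same number of factors from each class, so both can be rewritten as
  x_{t_1}^N ... x_{t_k}^N u_i with a common prefix and tails u_i of bounded length satisfying
  alpha_G(u_1) = alpha_G(u_2). Running the presentation of G inside S(G,Y), with y^-1 read
  as x_y^(N-1), shows that u_1 and u_2 become equal after appending a large central padding
  prod_y x_y^(bN); only finitely many pairs of short tails occur, so one b works for all of them,
  and this padding is made part of the common prefix.\<close>

lemma tau_append [simp]: "tau C (u @ v) = tau C u + tau C v"
  by (simp add: tau_def)

lemma tau_Cons [simp]: "tau C (x # u) = (if x \<in> C then 1 else 0) + tau C u"
  by (simp add: tau_def)

lemma tau_Nil [simp]: "tau C [] = 0"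
  by (simp add: tau_def)

lemma tau_replicate [simp]: "tau C (replicate n y) = (if y \<in> C then n else 0)"
  by (induction n) auto

lemma count_list_le_tau: "y \<in> C \<Longrightarrow> count_list u y \<le> tau C u"
  by (induction u) auto

lemma count_list_filter_in: "y \<in> C \<Longrightarrow> count_list (filter (\<lambda>x. x \<in> C) u) y = count_list u y"
  by (induction u) auto

lemma tau_eq_sum_count_list:
  assumes "finite C"
  shows "tau C u = (\<Sum>y\<in>C. count_list u y)"
proof -
  have "tau C u = (\<Sum>y\<in>C. count_list (filter (\<lambda>x. x \<in> C) u) y)"
    unfolding tau_def by (rule sum_count_set[symmetric]) (use assms in auto)
  also have "\<dots> = (\<Sum>y\<in>C. count_list u y)"
    by (rule sum.cong) (simp_all add: count_list_filter_in)
  finally show ?thesis .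
qed

lemma exists_frequent_letter:
  assumes "finite C" "C \<noteq> {}" "M * card C \<le> tau C u"
  shows "\<exists>y\<in>C. M \<le> count_list u y"
proof (rule ccontr)
  assume none: "\<not> ?thesis"
  have "(\<Sum>y\<in>C. count_list u y) < (\<Sum>y\<in>C. M)"
  proof (rule sum_strict_mono[OF assms(1,2)])
    fix y assume "y \<in> C"
    with none show "count_list u y < M" by (simp add: not_le)
  qed
  then have "tau C u < M * card C"
    by (simp add: tau_eq_sum_count_list[OF assms(1)] mult.commute)
  with assms(3) show False by simp
qed

lemma tau_concat_replicate:
  assumes "distinct Cs" "\<And>C'. C' \<in> set Cs \<Longrightarrow> r C' \<in> C \<longleftrightarrow> C' = C"
  shows "tau C (concat (map (\<lambda>C'. replicate (f C') (r C')) Cs)) = (if C \<in> set Cs then f C else 0)"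
  using assms by (induction Cs) auto

lemma concat_replicate_replicate: "concat (replicate m (replicate n x)) = replicate (m * n) x"
  by (induction m) (simp_all add: replicate_add)

lemma word_eval_positive: "word_eval G (map (\<lambda>y. (y, True)) u) = alpha G u"
  by (induction u) (simp_all add: word_eval_def alpha_def)

lemma pres_eq_lists:
  assumes "pres_eq Y R w1 w2" "R \<subseteq> Y \<times> Y \<times> Y"
  shows "set w1 \<subseteq> Y \<times> UNIV \<longleftrightarrow> set w2 \<subseteq> Y \<times> UNIV"
  using assms by (induction rule: pres_eq.induct) auto

section \<open>Hurwitz moves\<close>

abbreviation hurwitz_steps :: "('a, 'b) monoid_scheme \<Rightarrow> 'a list \<Rightarrow> 'a list \<Rightarrow> bool" where
  "hurwitz_steps G \<equiv> (hurwitz_step G)\<^sup>*\<^sup>*"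

lemma hurwitz_step_append_context:
  "hurwitz_step G u v \<Longrightarrow> hurwitz_step G (p @ u @ q) (p @ v @ q)"
proof (induction rule: hurwitz_step.induct)
  case (hs1 u a b v)
  show ?case using hurwitz_step.hs1[of G "p @ u" a b "v @ q"] by simp
next
  case (hs2 u a b v)
  show ?case using hurwitz_step.hs2[of G "p @ u" a b "v @ q"] by simp
qed

lemma hurwitz_steps_append_context:
  "hurwitz_steps G u v \<Longrightarrow> hurwitz_steps G (p @ u @ q) (p @ v @ q)"
  by (induction rule: rtranclp_induct)
     (auto intro: rtranclp.rtrancl_into_rtrancl hurwitz_step_append_context)

lemma hurwitz_steps_append_left: "hurwitz_steps G u v \<Longrightarrow> hurwitz_steps G (p @ u) (p @ v)"
  using hurwitz_steps_append_context[of G u v p "[]"] by simp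

lemma hurwitz_steps_append_right: "hurwitz_steps G u v \<Longrightarrow> hurwitz_steps G (u @ q) (v @ q)"
  using hurwitz_steps_append_context[of G u v "[]" q] by simp

lemma hurwitz_steps_move_left:
  "hurwitz_steps G (a @ [b]) (b # map (\<lambda>x. inv\<^bsub>G\<^esub> b \<otimes>\<^bsub>G\<^esub> x \<otimes>\<^bsub>G\<^esub> b) a)"
proof (induction a)
  case (Cons x a)
  let ?conj = "\<lambda>x. inv\<^bsub>G\<^esub> b \<otimes>\<^bsub>G\<^esub> x \<otimes>\<^bsub>G\<^esub> b"
  have "hurwitz_steps G ((x # a) @ [b]) (x # b # map ?conj a)"
    using hurwitz_steps_append_left[OF Cons.IH, of "[x]"] by simp
  moreover have "hurwitz_step G (x # b # map ?conj a) (b # map ?conj (x # a))"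
    using hurwitz_step.hs1[of G "[]" x b "map ?conj a"] by simp
  ultimately show ?case by (rule rtranclp.rtrancl_into_rtrancl)
qed simp

lemma hurwitz_steps_move_right:
  "hurwitz_steps G (a # t) (map (\<lambda>x. a \<otimes>\<^bsub>G\<^esub> x \<otimes>\<^bsub>G\<^esub> inv\<^bsub>G\<^esub> a) t @ [a])"
proof (induction t)
  case (Cons x t)
  let ?conj = "\<lambda>x. a \<otimes>\<^bsub>G\<^esub> x \<otimes>\<^bsub>G\<^esub> inv\<^bsub>G\<^esub> a"
  have "hurwitz_step G (a # x # t) (?conj x # a # t)"
    using hurwitz_step.hs2[of G "[]" a x t] by simp
  moreover have "hurwitz_steps G (?conj x # a # t) (map ?conj (x # t) @ [a])"
    using hurwitz_steps_append_left[OF Cons.IH, of "[?conj x]"] by simp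
  ultimately show ?case by (rule converse_rtranclp_into_rtranclp)
qed simp

lemma fact_eq_refl [simp]: "fact_eq G u u"
  unfolding fact_eq_def by simp

lemma fact_eq_sym: "fact_eq G u v \<Longrightarrow> fact_eq G v u"
  unfolding fact_eq_def by (rule equivclp_sym)

lemma fact_eq_trans [trans]: "fact_eq G u v \<Longrightarrow> fact_eq G v w \<Longrightarrow> fact_eq G u w"
  unfolding fact_eq_def by (rule equivclp_trans)

lemma fact_eq_if_hurwitz_steps: "hurwitz_steps G u v \<Longrightarrow> fact_eq G u v"
  unfolding fact_eq_def by (rule rtranclp_into_equivclp)

lemma fact_eq_append_context: "fact_eq G u v \<Longrightarrow> fact_eq G (p @ u @ q) (p @ v @ q)"
  unfolding fact_eq_def
proof (induction rule: equivclp_induct)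
  case (step y z)
  then show ?case
    using hurwitz_step_append_context[of G y z p q] hurwitz_step_append_context[of G z y p q]
    by (meson equivclp_into_equivclp)
qed simp

lemma fact_eq_append_left: "fact_eq G u v \<Longrightarrow> fact_eq G (p @ u) (p @ v)"
  using fact_eq_append_context[of G u v p "[]"] by simp

lemma fact_eq_append_right: "fact_eq G u v \<Longrightarrow> fact_eq G (u @ q) (v @ q)"
  using fact_eq_append_context[of G u v "[]" q] by simp

section \<open>Factorizations in a group\<close>

context group
begin

lemma mult_inv_cancel_left [simp]: "x \<in> carrier G \<Longrightarrow> y \<in> carrier G \<Longrightarrow> x \<otimes> (inv x \<otimes> y) = y"
  by (simp add: m_assoc[symmetric])

lemma inv_mult_cancel_left [simp]: "x \<in> carrier G \<Longrightarrow> y \<in> carrier G \<Longrightarrow> inv x \<otimes> (x \<otimes> y) = y"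
  by (simp add: m_assoc[symmetric])

lemma alpha_Cons [simp]: "alpha G (x # u) = x \<otimes> alpha G u"
  by (simp add: alpha_def)

lemma alpha_Nil [simp]: "alpha G [] = \<one>"
  by (simp add: alpha_def)

lemma alpha_closed [simp]: "set u \<subseteq> carrier G \<Longrightarrow> alpha G u \<in> carrier G"
  by (induction u) auto

lemma alpha_append:
  "set u \<subseteq> carrier G \<Longrightarrow> set v \<subseteq> carrier G \<Longrightarrow> alpha G (u @ v) = alpha G u \<otimes> alpha G v"
  by (induction u) (auto simp: m_assoc)

lemma alpha_append_cancel_left:
  assumes "set p \<subseteq> carrier G" "set u \<subseteq> carrier G" "set v \<subseteq> carrier G"
    and "alpha G (p @ u) = alpha G (p @ v)"
  shows "alpha G u = alpha G v"
  using assms by (simp add: alpha_append)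

lemma alpha_replicate: "y \<in> carrier G \<Longrightarrow> alpha G (replicate n y) = y [^] n"
  by (induction n) (simp_all add: nat_pow_Suc2[symmetric])

lemma alpha_append_pair:
  assumes "set u \<subseteq> carrier G" "set v \<subseteq> carrier G" "a \<in> carrier G" "b \<in> carrier G"
  shows "alpha G (u @ a # b # v) = alpha G u \<otimes> (a \<otimes> b) \<otimes> alpha G v"
  using assms by (simp add: alpha_append m_assoc)

lemma hurwitz_steps_move_block_left:
  assumes "set u \<subseteq> carrier G" "set t \<subseteq> carrier G"
  shows "hurwitz_steps G (u @ t) (map (\<lambda>x. alpha G u \<otimes> x \<otimes> inv (alpha G u)) t @ u)"
  using assms
proof (induction u arbitrary: t)
  case (Cons z u)
  let ?conj = "\<lambda>g x. g \<otimes> x \<otimes> inv g"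
  have z: "z \<in> carrier G" and u: "set u \<subseteq> carrier G" using Cons.prems by auto
  have conj_conj: "map (?conj z) (map (?conj (alpha G u)) t) = map (?conj (alpha G (z # u))) t"
  proof (rule list.map_comp[THEN trans], rule map_cong)
    fix x assume "x \<in> set t"
    with Cons.prems(2) have "x \<in> carrier G" by auto
    with z u show "(?conj z \<circ> ?conj (alpha G u)) x = ?conj (alpha G (z # u)) x"
      by (simp add: m_assoc inv_mult_group)
  qed simp
  have "hurwitz_steps G ((z # u) @ t) ([z] @ map (?conj (alpha G u)) t @ u)"
    using hurwitz_steps_append_left[OF Cons.IH[OF u Cons.prems(2)], of "[z]"] by simp
  also have "hurwitz_steps G \<dots> (map (?conj (alpha G (z # u))) t @ [z] @ u)"
    using hurwitz_steps_append_right[OF hurwitz_steps_move_right[of G z "map (?conj (alpha G u)) t"],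
        of u]
    unfolding conj_conj by simp
  finally show ?case by simp
next
  case Nil
  then have "map (\<lambda>x. alpha G [] \<otimes> x \<otimes> inv (alpha G [])) t = t" by (intro map_idI) auto
  then show ?case by simp
qed

lemma hurwitz_steps_central_block:
  assumes "set u \<subseteq> carrier G" "set t \<subseteq> carrier G"
    and central: "\<And>g. g \<in> carrier G \<Longrightarrow> alpha G u \<otimes> g = g \<otimes> alpha G u"
  shows "hurwitz_steps G (u @ t) (t @ u)"
proof -
  have "map (\<lambda>x. alpha G u \<otimes> x \<otimes> inv (alpha G u)) t = t"
  proof (rule map_idI)
    fix x assume "x \<in> set t"
    with assms(2) have x: "x \<in> carrier G" by auto
    then have "alpha G u \<otimes> x \<otimes> inv (alpha G u) = x \<otimes> alpha G u \<otimes> inv (alpha G u)"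
      by (simp add: central)
    also have "\<dots> = x" using x assms(1) by (simp add: m_assoc)
    finally show "alpha G u \<otimes> x \<otimes> inv (alpha G u) = x" .
  qed
  then show ?thesis using hurwitz_steps_move_block_left[OF assms(1,2)] by simp
qed

lemma hurwitz_step_carrier:
  assumes "hurwitz_step G w w'" "set w \<subseteq> carrier G"
  shows "set w' \<subseteq> carrier G"
  using assms by (cases rule: hurwitz_step.cases) auto

lemma hurwitz_step_alpha:
  assumes "hurwitz_step G w w'" "set w \<subseteq> carrier G"
  shows "alpha G w' = alpha G w"
  using assms
proof (cases rule: hurwitz_step.cases)
  case (hs1 u a b v)
  then have "b \<otimes> (inv b \<otimes> a \<otimes> b) = a \<otimes> b" using assms(2) by (simp add: m_assoc)
  then show ?thesis using hs1 assms(2) by (simp add: alpha_append_pair)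
next
  case (hs2 u a b v)
  then have "a \<otimes> b \<otimes> inv a \<otimes> a = a \<otimes> b" using assms(2) by (simp add: m_assoc)
  then show ?thesis using hs2 assms(2) by (simp add: alpha_append_pair)
qed

lemma generate_insert_redundant:
  assumes "A \<subseteq> carrier G" "x \<in> generate G A"
  shows "generate G (insert x A) = generate G A"
proof
  show "generate G (insert x A) \<subseteq> generate G A"
    using assms by (intro generate_subgroup_incl generate_is_subgroup) (auto intro: generate.incl)
  show "generate G A \<subseteq> generate G (insert x A)"
    using assms generate_incl by (intro mono_generate) auto
qed

lemma generate_exchange:
  assumes "insert a K \<subseteq> carrier G" "c \<in> generate G (insert a K)" "a \<in> generate G (insert c K)"
  shows "generate G (insert c K) = generate G (insert a K)"
proof -
  have "insert c K \<subseteq> carrier G" using assms(1,2) generate_incl by blast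
  then have "generate G (insert c K) = generate G (insert a (insert c K))"
    using assms(3) by (simp add: generate_insert_redundant)
  also have "\<dots> = generate G (insert c (insert a K))" by (simp add: insert_commute)
  also have "\<dots> = generate G (insert a K)" using assms(1,2) by (rule generate_insert_redundant)
  finally show ?thesis .
qed

lemma hurwitz_step_generate:
  assumes "hurwitz_step G w w'" "set w \<subseteq> carrier G"
  shows "generate G (set w') = generate G (set w)"
  using assms
proof (cases rule: hurwitz_step.cases)
  case (hs1 u a b v)
  let ?K = "insert b (set u \<union> set v)" and ?c = "inv b \<otimes> a \<otimes> b"
  have w: "set w = insert a ?K" "set w' = insert ?c ?K" using hs1 by auto
  have "?c \<in> generate G (insert a ?K)"
    by (intro generate.eng generate.inv generate.incl) auto
  moreover have "b \<otimes> ?c \<otimes> inv b \<in> generate G (insert ?c ?K)"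
    by (intro generate.eng generate.inv generate.incl) auto
  moreover have "b \<otimes> ?c \<otimes> inv b = a" using hs1 assms(2) by (simp add: m_assoc)
  ultimately show ?thesis using assms(2) unfolding w by (intro generate_exchange) auto
next
  case (hs2 u a b v)
  let ?K = "insert a (set u \<union> set v)" and ?c = "a \<otimes> b \<otimes> inv a"
  have w: "set w = insert b ?K" "set w' = insert ?c ?K" using hs2 by auto
  have "?c \<in> generate G (insert b ?K)"
    by (intro generate.eng generate.inv generate.incl) auto
  moreover have "inv a \<otimes> ?c \<otimes> a \<in> generate G (insert ?c ?K)"
    by (intro generate.eng generate.inv generate.incl) auto
  moreover have "inv a \<otimes> ?c \<otimes> a = b" using hs2 assms(2) by (simp add: m_assoc)
  ultimately show ?thesis using assms(2) unfolding w by (intro generate_exchange) auto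
qed

lemma conj_class_conj_subset:
  assumes "y \<in> carrier G" "h \<in> carrier G"
  shows "conj_class G (inv h \<otimes> y \<otimes> h) \<subseteq> conj_class G y"
proof
  fix x assume "x \<in> conj_class G (inv h \<otimes> y \<otimes> h)"
  then obtain g where "g \<in> carrier G" "x = inv g \<otimes> (inv h \<otimes> y \<otimes> h) \<otimes> g"
    by (auto simp: conj_class_def)
  moreover have "inv g \<otimes> (inv h \<otimes> y \<otimes> h) \<otimes> g = inv (h \<otimes> g) \<otimes> y \<otimes> (h \<otimes> g)"
    if "g \<in> carrier G" using that assms by (simp add: m_assoc inv_mult_group)
  ultimately show "x \<in> conj_class G y" using assms by (auto simp: conj_class_def)
qed

lemma conj_class_conj:
  assumes "y \<in> carrier G" "h \<in> carrier G"
  shows "conj_class G (inv h \<otimes> y \<otimes> h) = conj_class G y"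
proof
  have "y = inv (inv h) \<otimes> (inv h \<otimes> y \<otimes> h) \<otimes> inv h" using assms by (simp add: m_assoc)
  then show "conj_class G y \<subseteq> conj_class G (inv h \<otimes> y \<otimes> h)"
    using conj_class_conj_subset[of "inv h \<otimes> y \<otimes> h" "inv h"] assms by simp
qed (rule conj_class_conj_subset[OF assms])

lemma conj_class_self: "y \<in> carrier G \<Longrightarrow> y \<in> conj_class G y"
  unfolding conj_class_def by (rule CollectI, rule exI[of _ \<one>]) auto

lemma mem_conj_class_iff:
  assumes "x \<in> carrier G" "y \<in> carrier G"
  shows "x \<in> conj_class G y \<longleftrightarrow> conj_class G x = conj_class G y"
proof
  assume "x \<in> conj_class G y"
  then obtain g where "g \<in> carrier G" "x = inv g \<otimes> y \<otimes> g" by (auto simp: conj_class_def)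
  then show "conj_class G x = conj_class G y" using assms(2) conj_class_conj by simp
qed (use assms(1) conj_class_self in blast)

lemma conj_mem_conj_class_iff:
  assumes "x \<in> carrier G" "g \<in> carrier G" "y \<in> carrier G"
  shows "inv g \<otimes> x \<otimes> g \<in> conj_class G y \<longleftrightarrow> x \<in> conj_class G y"
  using assms by (simp add: mem_conj_class_iff conj_class_conj)

lemma conj_mem_conj_class_iff':
  assumes "x \<in> carrier G" "g \<in> carrier G" "y \<in> carrier G"
  shows "g \<otimes> x \<otimes> inv g \<in> conj_class G y \<longleftrightarrow> x \<in> conj_class G y"
  using assms conj_mem_conj_class_iff[of x "inv g" y] by simp

lemma conj_nat_pow:
  "g \<in> carrier G \<Longrightarrow> y \<in> carrier G \<Longrightarrow> (inv g \<otimes> y \<otimes> g) [^] (n :: nat) = inv g \<otimes> y [^] n \<otimes> g"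
  by (induction n) (simp_all add: m_assoc)

lemma hurwitz_step_tau:
  assumes "hurwitz_step G w w'" "set w \<subseteq> carrier G" "y \<in> carrier G"
  shows "tau (conj_class G y) w' = tau (conj_class G y) w"
  using assms
proof (cases rule: hurwitz_step.cases)
  case (hs1 u a b v)
  then show ?thesis using assms(2,3) by (simp add: conj_mem_conj_class_iff)
next
  case (hs2 u a b v)
  then show ?thesis using assms(2,3) by (simp add: conj_mem_conj_class_iff')
qed

lemma hurwitz_steps_invariants:
  assumes "hurwitz_steps G w w'" "set w \<subseteq> carrier G"
  shows "set w' \<subseteq> carrier G \<and> alpha G w' = alpha G w \<and> generate G (set w') = generate G (set w) \<and>
    (\<forall>y\<in>carrier G. tau (conj_class G y) w' = tau (conj_class G y) w)"
  using assms
  by (induction rule: rtranclp_induct)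
     (auto simp: hurwitz_step_carrier hurwitz_step_alpha hurwitz_step_generate hurwitz_step_tau)

lemma hurwitz_steps_to_front:
  assumes "set u \<subseteq> carrier G" "count_list u y = Suc n"
  shows "\<exists>t. hurwitz_steps G u (y # t) \<and> count_list t y = n"
proof -
  obtain p r where u: "u = p @ y # r" "y \<notin> set p" "count_list r y = n"
    using count_list_Suc_split_first[OF assms(2)] by blast
  let ?p' = "map (\<lambda>x. inv y \<otimes> x \<otimes> y) p"
  have "hurwitz_steps G (p @ [y] @ r) (y # ?p' @ r)"
    using hurwitz_steps_append_right[OF hurwitz_steps_move_left[of G p y], of r] by simp
  moreover have "y \<notin> set ?p'"
  proof
    assume "y \<in> set ?p'"
    then obtain x where x: "x \<in> set p" "y = inv y \<otimes> x \<otimes> y" by auto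
    have carr: "x \<in> carrier G" "y \<in> carrier G" using x(1) u(1) assms(1) by auto
    then have "x \<otimes> y = y \<otimes> (inv y \<otimes> x \<otimes> y)" by (simp add: m_assoc)
    also have "\<dots> = y \<otimes> y" using x(2) by simp
    finally have "x = y" using carr by simp
    with x(1) u(2) show False by simp
  qed
  ultimately show ?thesis using u by (intro exI[of _ "?p' @ r"]) (auto simp: count_list_0_iff)
qed

lemma hurwitz_steps_gather:
  assumes "set u \<subseteq> carrier G" "k \<le> count_list u y"
  shows "\<exists>t. hurwitz_steps G u (replicate k y @ t) \<and> count_list t y + k = count_list u y"
  using assms(2)
proof (induction k)
  case 0
  show ?case by (intro exI[of _ u]) simp
next
  case (Suc k)
  then obtain t where t: "hurwitz_steps G u (replicate k y @ t)" "count_list t y + k = count_list u y"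
    by auto
  have t_carrier: "set t \<subseteq> carrier G" using hurwitz_steps_invariants[OF t(1) assms(1)] by simp
  have "count_list t y \<noteq> 0" using t(2) Suc.prems by linarith
  then obtain n where n: "count_list t y = Suc n" using not0_implies_Suc by blast
  obtain t' where t': "hurwitz_steps G t (y # t')" "count_list t' y = n"
    using hurwitz_steps_to_front[OF t_carrier n] by blast
  have "hurwitz_steps G (replicate k y @ t) (replicate (Suc k) y @ t')"
    using hurwitz_steps_append_left[OF t'(1), of "replicate k y"]
    by (simp add: replicate_append_same[symmetric])
  with t(1) have "hurwitz_steps G u (replicate (Suc k) y @ t')" by (rule rtranclp_trans)
  then show ?case using t(2) n t'(2) by (intro exI[of _ t']) simp
qed

lemma commute_generate:
  assumes "a \<in> carrier G" "A \<subseteq> carrier G" "\<And>y. y \<in> A \<Longrightarrow> a \<otimes> y = y \<otimes> a"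
    and "g \<in> generate G A"
  shows "a \<otimes> g = g \<otimes> a"
  using assms(4)
proof (induction rule: generate.induct)
  case (inv h)
  then have h: "h \<in> carrier G" using assms(2) by auto
  have "a \<otimes> inv h = inv h \<otimes> (h \<otimes> a) \<otimes> inv h" using assms(1) h by (simp add: m_assoc)
  also have "\<dots> = inv h \<otimes> (a \<otimes> h) \<otimes> inv h" using assms(3)[OF inv] by simp
  also have "\<dots> = inv h \<otimes> a" using assms(1) h by (simp add: m_assoc)
  finally show ?case .
next
  case (eng h1 h2)
  then have "h1 \<in> carrier G" "h2 \<in> carrier G" using generate_incl[OF assms(2)] by auto
  then show ?case using eng assms(1) by (metis m_assoc)
qed (use assms in auto)

end

section \<open>Central powers of the factors\<close>

locale conj_generated = group G for G :: "('a, 'b) monoid_scheme" (structure) +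
  fixes Y :: "'a set"
  assumes Y_carrier: "Y \<subseteq> carrier G"
    and finite_Y: "finite Y"
    and conj_mem_Y: "\<lbrakk>g \<in> carrier G; y \<in> Y\<rbrakk> \<Longrightarrow> inv g \<otimes> y \<otimes> g \<in> Y"
    and generate_Y: "generate G Y = carrier G"
begin

lemma mem_Y_carrier [simp]: "y \<in> Y \<Longrightarrow> y \<in> carrier G"
  using Y_carrier by auto

lemma set_Y_carrier [simp]: "set w \<subseteq> Y \<Longrightarrow> set w \<subseteq> carrier G"
  using Y_carrier by auto

lemma conj_mem_Y': "\<lbrakk>g \<in> carrier G; y \<in> Y\<rbrakk> \<Longrightarrow> g \<otimes> y \<otimes> inv g \<in> Y"
  using conj_mem_Y[of "inv g" y] by simp

lemma conj_class_subset_Y: "y \<in> Y \<Longrightarrow> conj_class G y \<subseteq> Y"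
  unfolding conj_class_def using conj_mem_Y by auto

lemma hurwitz_steps_set_Y:
  assumes "hurwitz_steps G w w'" "set w \<subseteq> Y"
  shows "set w' \<subseteq> Y"
  using assms(1)
proof (induction rule: rtranclp_induct)
  case (step w' w'')
  from step.hyps(2) step.IH assms(2) show ?case
    by (cases rule: hurwitz_step.cases) (auto simp: conj_mem_Y conj_mem_Y')
qed (use assms(2) in simp)

text \<open>Conjugation by y^k, for k = 0, 1, 2, ..., induces only finitely many maps on the finite set Y,
  so two of them coincide, say for k1 < k2; then every y^(k2-k1) commutes with Y, hence is
  central.\<close>

lemma exists_central_power: "\<exists>N::nat>0. \<forall>y\<in>Y. \<forall>g\<in>carrier G. y [^] N \<otimes> g = g \<otimes> y [^] N"
proof -
  define F where "F k = (\<lambda>y\<in>Y. \<lambda>x\<in>Y. inv (y [^] k) \<otimes> x \<otimes> y [^] k)" for k :: nat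
  have "range F \<subseteq> Y \<rightarrow>\<^sub>E Y \<rightarrow>\<^sub>E Y"
    unfolding F_def using conj_mem_Y by auto
  moreover have "finite (Y \<rightarrow>\<^sub>E Y \<rightarrow>\<^sub>E Y)" using finite_Y by (simp add: finite_PiE)
  ultimately have "finite (range F)" by (rule finite_subset)
  then have "\<not> inj F" using finite_imageD infinite_UNIV_nat by blast
  then obtain k1 k2 where "k1 \<noteq> k2" "F k1 = F k2" unfolding inj_def by blast
  then obtain k1 k2 where k: "k1 < k2" "F k1 = F k2" by (metis linorder_neqE_nat)
  define d where "d = k2 - k1"
  have commute_Y: "y [^] d \<otimes> x = x \<otimes> y [^] d" if y: "y \<in> Y" and x: "x \<in> Y" for x y
  proof -
    define p where "p = y [^] k1"
    define q where "q = y [^] d"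
    have pq: "p \<in> carrier G" "q \<in> carrier G" "y [^] k2 = p \<otimes> q"
      using y k(1) unfolding p_def q_def d_def by (auto simp: nat_pow_mult)
    have "p \<otimes> x \<otimes> inv p \<in> Y" using conj_mem_Y' pq x by simp
    then have "inv p \<otimes> (p \<otimes> x \<otimes> inv p) \<otimes> p = inv (p \<otimes> q) \<otimes> (p \<otimes> x \<otimes> inv p) \<otimes> (p \<otimes> q)"
      using fun_cong[OF fun_cong[OF k(2), of y], of "p \<otimes> x \<otimes> inv p"] y pq
      unfolding F_def p_def by simp
    then have "x = inv q \<otimes> x \<otimes> q" using pq x by (simp add: m_assoc inv_mult_group)
    then have "q \<otimes> x = q \<otimes> (inv q \<otimes> x \<otimes> q)" by simp
    also have "\<dots> = x \<otimes> q" using pq x by (simp add: m_assoc)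
    finally show ?thesis unfolding q_def .
  qed
  have "d > 0" using k(1) unfolding d_def by simp
  moreover have "y [^] d \<otimes> g = g \<otimes> y [^] d" if "y \<in> Y" "g \<in> carrier G" for y g
    by (rule commute_generate[of _ Y]) (use that in \<open>auto simp: commute_Y generate_Y\<close>)
  ultimately show ?thesis by blast
qed

definition central_exp :: nat where
  "central_exp = (SOME N::nat. N > 0 \<and> (\<forall>y\<in>Y. \<forall>g\<in>carrier G. y [^] N \<otimes> g = g \<otimes> y [^] N))"

lemma central_exp_spec:
  "central_exp > 0 \<and> (\<forall>y\<in>Y. \<forall>g\<in>carrier G. y [^] central_exp \<otimes> g = g \<otimes> y [^] central_exp)"
  unfolding central_exp_def by (rule someI_ex[OF exists_central_power])

lemma central_exp_pos: "central_exp > 0"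
  and central_exp_central: "y \<in> Y \<Longrightarrow> g \<in> carrier G \<Longrightarrow> y [^] central_exp \<otimes> g = g \<otimes> y [^] central_exp"
  using central_exp_spec by auto

abbreviation central_word :: "'a \<Rightarrow> 'a list" where
  "central_word y \<equiv> replicate central_exp y"

lemma central_word_Cons: "y # replicate (central_exp - 1) y = central_word y"
proof -
  have "Suc (central_exp - 1) = central_exp" using central_exp_pos by simp
  then show ?thesis by (metis replicate_Suc)
qed

lemma central_word_snoc: "replicate (central_exp - 1) y @ [y] = central_word y"
  using central_word_Cons[of y] by (simp add: replicate_append_same)

lemma alpha_central_word_append:
  "y \<in> carrier G \<Longrightarrow> set u \<subseteq> carrier G \<Longrightarrow> alpha G (central_word y @ u) = y [^] central_exp \<otimes> alpha G u"
  by (subst alpha_append) (auto simp: alpha_replicate)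

lemma conj_class_central_power:
  assumes "y \<in> Y" "y' \<in> conj_class G y"
  shows "y' [^] central_exp = y [^] central_exp"
proof -
  obtain g where g: "g \<in> carrier G" "y' = inv g \<otimes> y \<otimes> g" using assms(2) by (auto simp: conj_class_def)
  then have "y' [^] central_exp = inv g \<otimes> y [^] central_exp \<otimes> g"
    using assms(1) by (simp only: conj_nat_pow mem_Y_carrier)
  also have "\<dots> = inv g \<otimes> (g \<otimes> y [^] central_exp)"
    using g assms(1) by (simp add: central_exp_central m_assoc)
  also have "\<dots> = y [^] central_exp" using g assms(1) by simp
  finally show ?thesis .
qed

lemma hurwitz_steps_central_word:
  "y \<in> Y \<Longrightarrow> set t \<subseteq> carrier G \<Longrightarrow> hurwitz_steps G (central_word y @ t) (t @ central_word y)"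
  by (rule hurwitz_steps_central_block) (auto simp: alpha_replicate central_exp_central)

lemma hurwitz_steps_central_words:
  assumes "set ps \<subseteq> Y" "set t \<subseteq> carrier G"
  shows "hurwitz_steps G (concat (map central_word ps) @ t) (t @ concat (map central_word ps))"
  using assms(1)
proof (induction ps)
  case (Cons p ps)
  have "hurwitz_steps G (central_word p @ (concat (map central_word ps) @ t))
      (central_word p @ (t @ concat (map central_word ps)))"
    using hurwitz_steps_append_left[OF Cons.IH] Cons.prems by simp
  also have "hurwitz_steps G \<dots> (t @ central_word p @ concat (map central_word ps))"
    using hurwitz_steps_append_right[OF hurwitz_steps_central_word[of p t]] Cons.prems assms(2) by simp
  finally show ?case by simp
qed simp

lemma fact_eq_central_word_commute:
  "y \<in> Y \<Longrightarrow> set t \<subseteq> Y \<Longrightarrow> fact_eq G (t @ central_word y) (central_word y @ t)"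
  using hurwitz_steps_central_word[of y t] by (auto intro: fact_eq_sym fact_eq_if_hurwitz_steps)

lemma fact_eq_central_word_conj_letter:
  assumes "y \<in> Y" "z \<in> Y"
  shows "fact_eq G (central_word y @ [z]) (central_word (z \<otimes> y \<otimes> inv z) @ [z])"
proof -
  have "hurwitz_steps G (central_word y @ [z]) (z # central_word y)"
    using hurwitz_steps_central_word[of y "[z]"] assms by simp
  also have "hurwitz_steps G \<dots> (central_word (z \<otimes> y \<otimes> inv z) @ [z])"
    using hurwitz_steps_move_right[of G z "central_word y"] by simp
  finally show ?thesis by (rule fact_eq_if_hurwitz_steps)
qed

lemma conj_inv_eq_conj_power:
  assumes "z \<in> Y" "y \<in> carrier G"
  shows "z [^] (central_exp - 1) \<otimes> y \<otimes> inv (z [^] (central_exp - 1)) = inv z \<otimes> y \<otimes> z"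
proof -
  let ?c = "z [^] central_exp"
  have z: "z \<in> carrier G" using assms(1) by simp
  have "z [^] (central_exp - 1) = ?c \<otimes> inv z"
    using central_exp_pos z by (metis Suc_pred' nat_pow_Suc nat_pow_closed inv_solve_right)
  then have "z [^] (central_exp - 1) \<otimes> y \<otimes> inv (z [^] (central_exp - 1)) = ?c \<otimes> (inv z \<otimes> y \<otimes> z) \<otimes> inv ?c"
    using z assms(2) by (simp add: m_assoc inv_mult_group)
  also have "\<dots> = inv z \<otimes> y \<otimes> z"
    using z assms central_exp_central[OF assms(1), of "inv z \<otimes> y \<otimes> z"] by (simp add: m_assoc)
  finally show ?thesis .
qed

text \<open>The conjugators of a factorization w form a submonoid of G containing the factors
  of w and, because z^N is central, also their inverses. Hence all of G is a conjugator when the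
  factors of w generate G.\<close>

definition central_conjugators :: "'a list \<Rightarrow> 'a set" where
  "central_conjugators w =
    {h \<in> carrier G. \<forall>y\<in>Y. fact_eq G (central_word y @ w) (central_word (h \<otimes> y \<otimes> inv h) @ w)}"

lemma one_mem_central_conjugators: "\<one> \<in> central_conjugators w"
  unfolding central_conjugators_def by auto

lemma mult_mem_central_conjugators:
  assumes "h1 \<in> central_conjugators w" "h2 \<in> central_conjugators w"
  shows "h1 \<otimes> h2 \<in> central_conjugators w"
proof -
  have h12: "h1 \<in> carrier G" "h2 \<in> carrier G" using assms unfolding central_conjugators_def by auto
  have "fact_eq G (central_word y @ w) (central_word ((h1 \<otimes> h2) \<otimes> y \<otimes> inv (h1 \<otimes> h2)) @ w)"
    if "y \<in> Y" for y
  proof -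
    have "fact_eq G (central_word y @ w) (central_word (h2 \<otimes> y \<otimes> inv h2) @ w)"
      using assms(2) that unfolding central_conjugators_def by auto
    also have "fact_eq G \<dots> (central_word (h1 \<otimes> (h2 \<otimes> y \<otimes> inv h2) \<otimes> inv h1) @ w)"
      using assms(1) conj_mem_Y'[OF h12(2) that] unfolding central_conjugators_def by auto
    also have "h1 \<otimes> (h2 \<otimes> y \<otimes> inv h2) \<otimes> inv h1 = (h1 \<otimes> h2) \<otimes> y \<otimes> inv (h1 \<otimes> h2)"
      using h12 that by (simp add: m_assoc inv_mult_group)
    finally show ?thesis .
  qed
  then show ?thesis unfolding central_conjugators_def using h12 by auto
qed

lemma pow_mem_central_conjugators:
  "h \<in> central_conjugators w \<Longrightarrow> h [^] (n :: nat) \<in> central_conjugators w"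
  by (induction n) (simp_all add: one_mem_central_conjugators mult_mem_central_conjugators)

lemma factor_mem_central_conjugators:
  assumes w: "set w \<subseteq> Y" and z: "z \<in> set w"
  shows "z \<in> central_conjugators w"
proof -
  obtain a b where ab: "w = a @ z # b" using split_list[OF z] by blast
  have Y: "z \<in> Y" "set a \<subseteq> Y" using ab w by auto
  have "fact_eq G (central_word y @ w) (central_word (z \<otimes> y \<otimes> inv z) @ w)" if "y \<in> Y" for y
  proof -
    have "fact_eq G (central_word y @ a @ [z] @ b) (a @ central_word y @ [z] @ b)"
      using fact_eq_append_right[OF fact_eq_central_word_commute[OF that Y(2)], of "[z] @ b"]
      by (simp add: fact_eq_sym)
    also have "fact_eq G \<dots> (a @ central_word (z \<otimes> y \<otimes> inv z) @ [z] @ b)"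
      using fact_eq_append_context[OF fact_eq_central_word_conj_letter[OF that Y(1)], of a b] by simp
    also have "fact_eq G \<dots> (central_word (z \<otimes> y \<otimes> inv z) @ a @ [z] @ b)"
      using fact_eq_append_right[OF fact_eq_central_word_commute[OF _ Y(2)], of _ "[z] @ b"]
        conj_mem_Y'[OF _ that] Y(1) by simp
    finally show ?thesis by (simp add: ab)
  qed
  then show ?thesis unfolding central_conjugators_def using Y(1) by simp
qed

lemma inv_factor_mem_central_conjugators:
  assumes "set w \<subseteq> Y" "z \<in> set w"
  shows "inv z \<in> central_conjugators w"
proof -
  have "z \<in> Y" using assms by auto
  then have "inv z \<otimes> y \<otimes> inv (inv z) = z [^] (central_exp - 1) \<otimes> y \<otimes> inv (z [^] (central_exp - 1))"
    if "y \<in> Y" for y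
    using conj_inv_eq_conj_power that by simp
  then show ?thesis
    using pow_mem_central_conjugators[OF factor_mem_central_conjugators[OF assms]] \<open>z \<in> Y\<close>
    unfolding central_conjugators_def by auto
qed

lemma central_conjugators_eq_carrier:
  assumes "set w \<subseteq> Y" "generate G (set w) = carrier G"
  shows "central_conjugators w = carrier G"
proof
  show "central_conjugators w \<subseteq> carrier G" unfolding central_conjugators_def by auto
  show "carrier G \<subseteq> central_conjugators w"
  proof
    fix g assume "g \<in> carrier G"
    then have "g \<in> generate G (set w)" using assms(2) by simp
    then show "g \<in> central_conjugators w"
      by (induction rule: generate.induct)
         (simp_all add: one_mem_central_conjugators mult_mem_central_conjugators
           factor_mem_central_conjugators[OF assms(1)] inv_factor_mem_central_conjugators[OF assms(1)])
  qed
qed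

lemma fact_eq_central_word_conj_class:
  assumes "set w \<subseteq> Y" "generate G (set w) = carrier G" "y \<in> Y" "r \<in> conj_class G y"
  shows "fact_eq G (central_word y @ w) (central_word r @ w)"
proof -
  obtain g where g: "g \<in> carrier G" "r = inv g \<otimes> y \<otimes> g" using assms(4) by (auto simp: conj_class_def)
  then have "inv g \<in> central_conjugators w" using central_conjugators_eq_carrier[OF assms(1,2)] by simp
  then have "fact_eq G (central_word y @ w) (central_word (inv g \<otimes> y \<otimes> inv (inv g)) @ w)"
    using assms(3) unfolding central_conjugators_def by blast
  then show ?thesis using g by simp
qed

lemma tau_concat_central_words: "tau C (concat (map central_word ts)) = central_exp * tau C ts"
  by (induction ts) simp_all

lemma exists_frequent_conjugate:
  assumes y: "y \<in> Y" and many: "M * card Y \<le> tau (conj_class G y) u"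
  shows "\<exists>y'\<in>conj_class G y. M \<le> count_list u y'"
proof -
  let ?C = "conj_class G y"
  have CY: "?C \<subseteq> Y" using conj_class_subset_Y[OF y] .
  have "M * card ?C \<le> M * card Y" using card_mono[OF finite_Y CY] by (rule mult_le_mono2)
  then have "M * card ?C \<le> tau ?C u" using many by (rule le_trans)
  moreover have "finite ?C" "?C \<noteq> {}" using finite_subset[OF CY finite_Y] conj_class_self[of y] y by auto
  ultimately show ?thesis using exists_frequent_letter by blast
qed

text \<open>Gathering 2N copies of one letter of the class keeps that letter among the
  remaining factors, so the rest still generates G.\<close>

lemma extract_central_word:
  assumes u: "set u \<subseteq> Y" "generate G (set u) = carrier G" and y: "y \<in> Y"
    and many: "2 * central_exp * card Y \<le> tau (conj_class G y) u"
  shows "\<exists>u'. fact_eq G u (central_word y @ u') \<and> set u' \<subseteq> Y \<and> generate G (set u') = carrier G \<and>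
    alpha G u = alpha G (central_word y @ u') \<and>
    (\<forall>x\<in>carrier G. tau (conj_class G x) u = tau (conj_class G x) (central_word y @ u'))"
proof -
  let ?C = "conj_class G y"
  obtain y' where y': "y' \<in> ?C" "2 * central_exp \<le> count_list u y'"
    using exists_frequent_conjugate[OF y many] by blast
  have y'Y: "y' \<in> Y" using y' conj_class_subset_Y[OF y] by auto
  obtain t where t: "hurwitz_steps G u (replicate (2 * central_exp) y' @ t)"
    using hurwitz_steps_gather[OF set_Y_carrier[OF u(1)] y'(2)] by blast
  define u' where "u' = central_word y' @ t"
  have split: "replicate (2 * central_exp) y' @ t = central_word y' @ u'"
    unfolding u'_def by (simp add: mult_2 replicate_add)
  from hurwitz_steps_invariants[OF t set_Y_carrier[OF u(1)]]
  have inv: "alpha G (central_word y' @ u') = alpha G u"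
    "generate G (set (central_word y' @ u')) = carrier G"
    "\<forall>x\<in>carrier G. tau (conj_class G x) (central_word y' @ u') = tau (conj_class G x) u"
    unfolding split u(2) by blast+
  have "set (central_word y') = {y'}" using central_exp_pos by simp
  then have set_u': "set u' = set (central_word y' @ u')" unfolding u'_def by simp
  have u'Y: "set u' \<subseteq> Y"
    using hurwitz_steps_set_Y[OF t u(1)] unfolding split set_u'[symmetric] by simp
  have gen_u': "generate G (set u') = carrier G" using inv(2) unfolding set_u'[symmetric] .
  have same_class: "conj_class G y' = ?C"
    using mem_conj_class_iff y' y'Y y by simp
  have "fact_eq G u (central_word y' @ u')"
    using fact_eq_if_hurwitz_steps[OF t] unfolding split .
  also have "fact_eq G \<dots> (central_word y @ u')"
    using fact_eq_central_word_conj_class[OF u'Y gen_u' y'Y] same_class conj_class_self[of y] y by simp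
  finally have "fact_eq G u (central_word y @ u')" .
  moreover have "alpha G u = alpha G (central_word y @ u')"
    using inv(1) u'Y y'Y y conj_class_central_power[OF y y'(1)]
    by (simp add: alpha_central_word_append)
  moreover have "tau (conj_class G x) u = tau (conj_class G x) (central_word y @ u')"
    if "x \<in> carrier G" for x
  proof -
    have "y' \<in> conj_class G x \<longleftrightarrow> y \<in> conj_class G x"
      using mem_conj_class_iff that y y'Y same_class by simp
    then show ?thesis using bspec[OF inv(3) that] by simp
  qed
  ultimately show ?thesis using u'Y gen_u' by blast
qed

lemma extract_central_words:
  assumes "set u \<subseteq> Y" "generate G (set u) = carrier G" "set ts \<subseteq> Y"
    and "\<And>y. y \<in> Y \<Longrightarrow>
      2 * central_exp * card Y + central_exp * tau (conj_class G y) ts \<le> tau (conj_class G y) u"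
  shows "\<exists>u'. fact_eq G u (concat (map central_word ts) @ u') \<and> set u' \<subseteq> Y \<and>
    alpha G u = alpha G (concat (map central_word ts) @ u') \<and>
    (\<forall>x\<in>carrier G. tau (conj_class G x) u = tau (conj_class G x) (concat (map central_word ts) @ u'))"
  using assms
proof (induction ts arbitrary: u)
  case Nil
  show ?case using Nil.prems(1) by (intro exI[of _ u]) simp
next
  case (Cons r ts)
  have r: "r \<in> Y" "set ts \<subseteq> Y" using Cons.prems(3) by auto
  have "2 * central_exp * card Y \<le> tau (conj_class G r) u"
    using Cons.prems(4)[OF r(1)] by simp
  then obtain u1 where u1: "fact_eq G u (central_word r @ u1)" "set u1 \<subseteq> Y"
    "generate G (set u1) = carrier G"
    "alpha G u = alpha G (central_word r @ u1)"
    "\<forall>x\<in>carrier G. tau (conj_class G x) u = tau (conj_class G x) (central_word r @ u1)"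
    using extract_central_word[OF Cons.prems(1,2) r(1)] by blast
  have "2 * central_exp * card Y + central_exp * tau (conj_class G y) ts \<le> tau (conj_class G y) u1"
    if "y \<in> Y" for y
  proof -
    have "tau (conj_class G y) u =
        (if r \<in> conj_class G y then central_exp else 0) + tau (conj_class G y) u1"
      using u1(5) that by simp
    then show ?thesis using Cons.prems(4)[OF that] by (cases "r \<in> conj_class G y") simp_all
  qed
  then obtain u2 where u2: "fact_eq G u1 (concat (map central_word ts) @ u2)" "set u2 \<subseteq> Y"
    "alpha G u1 = alpha G (concat (map central_word ts) @ u2)"
    "\<forall>x\<in>carrier G. tau (conj_class G x) u1 = tau (conj_class G x) (concat (map central_word ts) @ u2)"
    using Cons.IH[OF u1(2,3) r(2)] by blast
  have "fact_eq G u (concat (map central_word (r # ts)) @ u2)"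
    using fact_eq_trans[OF u1(1) fact_eq_append_left[OF u2(1)]] by simp
  moreover have "alpha G u = alpha G (concat (map central_word (r # ts)) @ u2)"
  proof -
    let ?rest = "concat (map central_word ts) @ u2"
    have "set ?rest \<subseteq> carrier G" using u2(2) r(2) by auto
    then have "alpha G (central_word r @ ?rest) = r [^] central_exp \<otimes> alpha G ?rest"
      using alpha_central_word_append r(1) by simp
    then show ?thesis using u1(2,4) u2(3) r(1) by (simp add: alpha_central_word_append)
  qed
  moreover have "\<forall>x\<in>carrier G.
      tau (conj_class G x) u = tau (conj_class G x) (concat (map central_word (r # ts)) @ u2)"
    using u1(5) u2(4) by simp
  ultimately show ?case using u2(2) by blast
qed

lemma length_le_tau_bound:
  assumes "set u \<subseteq> Y" "\<And>y. y \<in> Y \<Longrightarrow> tau (conj_class G y) u \<le> K"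
  shows "length u \<le> card Y * K"
proof -
  have "length u = (\<Sum>y\<in>Y. count_list u y)" using sum_count_set[OF assms(1) finite_Y] by simp
  also have "\<dots> \<le> (\<Sum>y\<in>Y. tau (conj_class G y) u)"
    by (intro sum_mono count_list_le_tau conj_class_self) simp
  also have "\<dots> \<le> (\<Sum>y\<in>Y. K)" by (intro sum_mono assms(2))
  finally show ?thesis by simp
qed

lemma extract_central_words_bounded:
  assumes "set s \<subseteq> Y" "generate G (set s) = carrier G" "set ts \<subseteq> Y"
    and lower: "\<And>y. y \<in> Y \<Longrightarrow>
      2 * central_exp * card Y + central_exp * tau (conj_class G y) ts \<le> tau (conj_class G y) s"
    and upper: "\<And>y. y \<in> Y \<Longrightarrow> tau (conj_class G y) s \<le> central_exp * tau (conj_class G y) ts + K"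
  shows "\<exists>u. fact_eq G s (concat (map central_word ts) @ u) \<and> set u \<subseteq> Y \<and> length u \<le> card Y * K \<and>
    alpha G s = alpha G (concat (map central_word ts) @ u)"
proof -
  obtain u where u: "fact_eq G s (concat (map central_word ts) @ u)" "set u \<subseteq> Y"
    "alpha G s = alpha G (concat (map central_word ts) @ u)"
    "\<forall>x\<in>carrier G. tau (conj_class G x) s = tau (conj_class G x) (concat (map central_word ts) @ u)"
    using extract_central_words[OF assms(1-3) lower] by blast
  have "tau (conj_class G y) u \<le> K" if "y \<in> Y" for y
    using bspec[OF u(4), of y] upper[OF that] that by (simp add: tau_concat_central_words)
  then show ?thesis using u length_le_tau_bound by blast
qed

lemma exists_word_with_class_counts:
  "\<exists>ts. set ts \<subseteq> Y \<and> (\<forall>y\<in>Y. tau (conj_class G y) ts = k (conj_class G y))"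
proof -
  obtain Cs where Cs: "set Cs = conj_class G ` Y" "distinct Cs"
    using finite_distinct_list[OF finite_imageI[OF finite_Y, of "conj_class G"]] by blast
  define rep where "rep C = (SOME y. y \<in> C)" for C :: "'a set"
  have rep: "rep C \<in> C" "rep C \<in> Y" "conj_class G (rep C) = C" if C: "C \<in> set Cs" for C
  proof -
    obtain y1 where y1: "y1 \<in> Y" "C = conj_class G y1" using C Cs(1) by auto
    have "y1 \<in> C" using conj_class_self[of y1] y1 by simp
    then show "rep C \<in> C" unfolding rep_def by (rule someI)
    then show "rep C \<in> Y" using conj_class_subset_Y[OF y1(1)] y1(2) by auto
    then show "conj_class G (rep C) = C"
      using mem_conj_class_iff[of "rep C" y1] \<open>rep C \<in> C\<close> y1 by simp
  qed
  have rep_iff: "rep C \<in> conj_class G y \<longleftrightarrow> C = conj_class G y" if "C \<in> set Cs" "y \<in> Y" for C y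
  proof -
    have "rep C \<in> conj_class G y \<longleftrightarrow> conj_class G (rep C) = conj_class G y"
      using rep(2)[OF that(1)] that(2) by (intro mem_conj_class_iff) simp_all
    then show ?thesis unfolding rep(3)[OF that(1)] .
  qed
  define ts where "ts = concat (map (\<lambda>C. replicate (k C) (rep C)) Cs)"
  have "set ts \<subseteq> Y" unfolding ts_def using rep(2) by auto
  moreover have "tau (conj_class G y) ts = k (conj_class G y)" if "y \<in> Y" for y
    unfolding ts_def using tau_concat_replicate[OF Cs(2), of rep "conj_class G y" k] rep_iff that Cs(1)
    by simp
  ultimately show ?thesis by (intro exI[of _ ts]) simp
qed

lemma exists_central_prefix:
  assumes many: "\<And>y. y \<in> Y \<Longrightarrow> M + central_exp * length P \<le> tau (conj_class G y) s"
  shows "\<exists>ts. set ts \<subseteq> Y \<and> (\<forall>y\<in>Y.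
    M + central_exp * tau (conj_class G y) (P @ ts) \<le> tau (conj_class G y) s \<and>
    tau (conj_class G y) s \<le> central_exp * tau (conj_class G y) (P @ ts) + (M + central_exp))"
proof -
  define k where "k C = (tau C s - M) div central_exp" for C
  obtain ts where ts: "set ts \<subseteq> Y"
    "\<And>y. y \<in> Y \<Longrightarrow> tau (conj_class G y) ts = k (conj_class G y) - tau (conj_class G y) P"
    using exists_word_with_class_counts[of "\<lambda>C. k C - tau C P"] by blast
  have "M + central_exp * tau (conj_class G y) (P @ ts) \<le> tau (conj_class G y) s \<and>
    tau (conj_class G y) s \<le> central_exp * tau (conj_class G y) (P @ ts) + (M + central_exp)"
    if "y \<in> Y" for y
  proof -
    let ?C = "conj_class G y"
    have "central_exp * length P \<le> tau ?C s - M" using many[OF that] by simp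
    then have "length P \<le> k ?C" unfolding k_def using central_exp_pos
      by (metis div_le_mono nonzero_mult_div_cancel_left not_gr0)
    moreover have "tau ?C P \<le> length P" unfolding tau_def by simp
    ultimately have "tau ?C (P @ ts) = k ?C" using ts(2)[OF that] by simp
    moreover have "central_exp * k ?C \<le> tau ?C s - M" "tau ?C s - M < central_exp * k ?C + central_exp"
      unfolding k_def using central_exp_pos dividend_less_div_times[of central_exp "tau ?C s - M"]
      by (simp_all add: mult.commute)
    ultimately show ?thesis using many[OF that] by (simp add: less_diff_conv2)
  qed
  then show ?thesis using ts(1) by blast
qed

lemma fact_eq_cancel_padding:
  assumes "set P \<subseteq> Y" "set ts \<subseteq> Y" "set u1 \<subseteq> Y" "set u2 \<subseteq> Y"
    and pad: "fact_eq G (u1 @ concat (map central_word P)) (u2 @ concat (map central_word P))"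
  shows "fact_eq G (concat (map central_word (P @ ts)) @ u1) (concat (map central_word (P @ ts)) @ u2)"
proof -
  let ?cws = "\<lambda>ts. concat (map central_word ts)"
  have commute: "fact_eq G (?cws P @ ?cws ts @ u) (?cws ts @ u @ ?cws P)" if "set u \<subseteq> Y" for u
  proof -
    have "set (?cws ts @ u) \<subseteq> carrier G" using assms(2) that by auto
    from fact_eq_if_hurwitz_steps[OF hurwitz_steps_central_words[OF assms(1) this]] show ?thesis by simp
  qed
  have "fact_eq G (?cws (P @ ts) @ u1) (?cws ts @ u1 @ ?cws P)" using commute[OF assms(3)] by simp
  also have "fact_eq G \<dots> (?cws ts @ u2 @ ?cws P)" using fact_eq_append_left[OF pad] by simp
  also have "fact_eq G \<dots> (?cws (P @ ts) @ u2)" using fact_eq_sym[OF commute[OF assms(4)]] by simp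
  finally show ?thesis .
qed

section \<open>Running the presentation inside the factorization semigroup\<close>

definition Y_list :: "'a list" where
  "Y_list = (SOME l. set l = Y \<and> distinct l)"

lemma Y_list: "set Y_list = Y" "distinct Y_list"
  using someI_ex[OF finite_distinct_list[OF finite_Y]] unfolding Y_list_def by auto

text \<open>A signed word w over Y is modelled by the factorization positive_word w, in which an
  inverse letter y^-1 becomes x_y^(N-1). A free cancellation then produces a central
  factor x_y^N, which is absorbed by the compensator: for b at least the length of w it
  contains (b - number of letters y^-1 in w) copies of x_y^N for every y.\<close>

definition positive_word :: "('a \<times> bool) list \<Rightarrow> 'a list" where
  "positive_word w = concat (map (\<lambda>(y, e). if e then [y] else replicate (central_exp - 1) y) w)"

definition compensator :: "nat \<Rightarrow> ('a \<times> bool) list \<Rightarrow> 'a list" where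
  "compensator b w =
    concat (map (\<lambda>x. replicate ((b - count_list w (x, False)) * central_exp) x) Y_list)"

lemma positive_word_append [simp]: "positive_word (u @ v) = positive_word u @ positive_word v"
  by (simp add: positive_word_def)

lemma positive_word_Cons [simp]:
  "positive_word ((y, e) # w) = (if e then [y] else replicate (central_exp - 1) y) @ positive_word w"
  by (simp add: positive_word_def)

lemma positive_word_Nil [simp]: "positive_word [] = []"
  by (simp add: positive_word_def)

lemma positive_word_positive [simp]: "positive_word (map (\<lambda>y. (y, True)) u) = u"
  by (induction u) auto

lemma positive_word_Y: "set w \<subseteq> Y \<times> UNIV \<Longrightarrow> set (positive_word w) \<subseteq> Y"
  by (induction w) (auto split: if_split_asm)

lemma compensator_Y: "set (compensator b w) \<subseteq> Y"
proof -
  have "set (replicate n x) \<subseteq> {x}" for n and x :: 'a by (induction n) auto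
  then show ?thesis unfolding compensator_def using Y_list(1) by auto
qed

definition padding_letters :: "nat \<Rightarrow> 'a list" where
  "padding_letters b = concat (map (replicate b) Y_list)"

lemma padding_letters_Y: "set (padding_letters b) \<subseteq> Y"
proof -
  have "set (concat (map (replicate b) l)) \<subseteq> set l" for l :: "'a list" by (induction l) auto
  then show ?thesis unfolding padding_letters_def using Y_list(1) by blast
qed

lemma compensator_positive:
  "compensator b (map (\<lambda>y. (y, True)) u) = concat (map central_word (padding_letters b))"
proof -
  have "count_list (map (\<lambda>y. (y, True)) u) (x, False) = 0" for x by (induction u) auto
  moreover have "concat (map central_word (concat (map (replicate b) l))) =
      concat (map (\<lambda>x. replicate (b * central_exp) x) l)" for l :: "'a list"
    by (induction l) (simp_all add: concat_replicate_replicate map_replicate)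
  ultimately show ?thesis unfolding compensator_def padding_letters_def by simp
qed

lemma fact_eq_append_central_word_block:
  assumes "set l \<subseteq> Y" "distinct l" "y \<in> set l"
  shows "fact_eq G (concat (map (\<lambda>x. replicate (k x * central_exp) x) l) @ central_word y)
    (concat (map (\<lambda>x. replicate ((k x + (if x = y then 1 else 0)) * central_exp) x) l))"
  using assms
proof (induction l)
  case (Cons x l)
  let ?block = "\<lambda>k. concat (map (\<lambda>x. replicate (k x * central_exp) x) l)"
  show ?case
  proof (cases "x = y")
    case True
    then have "y \<notin> set l" "y \<in> Y" "set (?block k) \<subseteq> Y" using Cons.prems by auto
    then have "?block (\<lambda>x. k x + (if x = y then 1 else 0)) = ?block k"
      by (intro arg_cong[where f = concat] map_cong) auto
    moreover have "fact_eq G (replicate (k y * central_exp) y @ ?block k @ central_word y)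
        (replicate (k y * central_exp) y @ central_word y @ ?block k)"
      using fact_eq_append_left[OF fact_eq_central_word_commute[OF \<open>y \<in> Y\<close> \<open>set (?block k) \<subseteq> Y\<close>]]
      by simp
    ultimately show ?thesis using True by (simp add: replicate_add add_mult_distrib)
  next
    case False
    then show ?thesis
      using fact_eq_append_left[OF Cons.IH] Cons.prems by auto
  qed
qed simp

lemma fact_eq_absorb_central_word:
  assumes Y: "set A \<subseteq> Y" "set B \<subseteq> Y" "y \<in> Y"
    and counts: "\<And>x. count_list w (x, False) = count_list w' (x, False) + (if x = y then 1 else 0)"
    and "count_list w (y, False) \<le> b"
  shows "fact_eq G (A @ central_word y @ B @ compensator b w) (A @ B @ compensator b w')"
proof -
  have "compensator b w' = concat (map (\<lambda>x.
      replicate (((b - count_list w (x, False)) + (if x = y then 1 else 0)) * central_exp) x) Y_list)"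
    unfolding compensator_def using counts[of y] assms(5)
    by (intro arg_cong[where f = concat] map_cong refl) (auto simp: counts)
  then have "fact_eq G (compensator b w @ central_word y) (compensator b w')"
    unfolding compensator_def using fact_eq_append_central_word_block Y_list Y(3) by simp
  moreover have "fact_eq G (central_word y @ B @ compensator b w) (B @ compensator b w @ central_word y)"
    using fact_eq_central_word_commute[of y "B @ compensator b w"] Y compensator_Y
    by (simp add: fact_eq_sym)
  ultimately show ?thesis
    using fact_eq_append_left fact_eq_trans by (metis append_assoc)
qed

lemma fact_eq_padded_step:
  assumes Y: "set u \<subseteq> Y \<times> UNIV" "set v \<subseteq> Y \<times> UNIV" "set (positive_word s2) \<subseteq> Y" "z \<in> Y"
    and steps: "hurwitz_steps G (positive_word s1) (central_word z @ positive_word s2)"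
    and counts: "\<And>x. count_list s1 (x, False) = count_list s2 (x, False) + (if x = z then 1 else 0)"
    and "length (u @ s1 @ v) \<le> b"
  shows "fact_eq G (positive_word (u @ s1 @ v) @ compensator b (u @ s1 @ v))
    (positive_word (u @ s2 @ v) @ compensator b (u @ s2 @ v))"
proof -
  have "fact_eq G (positive_word (u @ s1 @ v) @ compensator b (u @ s1 @ v))
      (positive_word u @ central_word z @ (positive_word s2 @ positive_word v) @
        compensator b (u @ s1 @ v))"
    using fact_eq_if_hurwitz_steps[OF hurwitz_steps_append_context[OF steps]] by simp
  also have "fact_eq G \<dots>
      (positive_word u @ (positive_word s2 @ positive_word v) @ compensator b (u @ s2 @ v))"
  proof (rule fact_eq_absorb_central_word)
    show "count_list (u @ s1 @ v) (z, False) \<le> b"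
      using count_le_length[of "u @ s1 @ v" "(z, False)"] assms(7) by (rule le_trans)
  qed (use Y positive_word_Y counts in auto)
  finally show ?thesis by simp
qed

lemma fact_eq_padded_cancel:
  assumes "set (u @ [(y, e), (y, \<not> e)] @ v) \<subseteq> Y \<times> UNIV"
    and "length (u @ [(y, e), (y, \<not> e)] @ v) \<le> b"
  shows "fact_eq G
    (positive_word (u @ [(y, e), (y, \<not> e)] @ v) @ compensator b (u @ [(y, e), (y, \<not> e)] @ v))
    (positive_word (u @ v) @ compensator b (u @ v))"
proof -
  have "fact_eq G
    (positive_word (u @ [(y, e), (y, \<not> e)] @ v) @ compensator b (u @ [(y, e), (y, \<not> e)] @ v))
    (positive_word (u @ [] @ v) @ compensator b (u @ [] @ v))"
  proof (rule fact_eq_padded_step[OF _ _ _ _ _ _ assms(2)])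
    have "positive_word [(y, e), (y, \<not> e)] = central_word y @ positive_word []"
      using central_word_Cons[of y] central_word_snoc[of y] by (cases e) simp_all
    then show "hurwitz_steps G (positive_word [(y, e), (y, \<not> e)]) (central_word y @ positive_word [])"
      by simp
    show "count_list [(y, e), (y, \<not> e)] (x, False) = count_list [] (x, False) + (if x = y then 1 else 0)"
      for x by (cases e) simp_all
  qed (use assms(1) in simp_all)
  then show ?thesis by simp
qed

lemma fact_eq_padded_conj:
  assumes "set (u @ v) \<subseteq> Y \<times> UNIV" "y \<in> Y" "z \<in> Y"
    and "length (u @ [(z, False), (y, True), (z, True)] @ v) \<le> b"
  shows "fact_eq G (positive_word (u @ [(z, False), (y, True), (z, True)] @ v) @
      compensator b (u @ [(z, False), (y, True), (z, True)] @ v))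
    (positive_word (u @ [(inv z \<otimes> y \<otimes> z, True)] @ v) @ compensator b (u @ [(inv z \<otimes> y \<otimes> z, True)] @ v))"
proof (rule fact_eq_padded_step[OF _ _ _ _ _ _ assms(4)])
  let ?y' = "inv z \<otimes> y \<otimes> z"
  have "hurwitz_step G (replicate (central_exp - 1) z @ [y, z] @ [])
      (replicate (central_exp - 1) z @ [z, ?y'] @ [])"
    by (rule hurwitz_step.hs1)
  moreover have "replicate (central_exp - 1) z @ [z, ?y'] @ [] =
      central_word z @ positive_word [(?y', True)]"
    by (simp flip: central_word_snoc)
  moreover have "positive_word [(z, False), (y, True), (z, True)] =
      replicate (central_exp - 1) z @ [y, z] @ []"
    by simp
  ultimately have "hurwitz_step G (positive_word [(z, False), (y, True), (z, True)])
      (central_word z @ positive_word [(?y', True)])"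
    by (simp only:)
  then show "hurwitz_steps G (positive_word [(z, False), (y, True), (z, True)])
      (central_word z @ positive_word [(?y', True)])"
    by (rule r_into_rtranclp)
qed (use assms conj_mem_Y in simp_all)

end

section \<open>Factorizations with many factors\<close>

locale C_group = conj_generated +
  fixes R :: "('a \<times> 'a \<times> 'a) set"
  assumes R_conj: "R \<subseteq> {(y, y', z). y \<in> Y \<and> y' \<in> Y \<and> z \<in> Y \<and> inv z \<otimes> y \<otimes> z = y'}"
    and presents: "presents G Y R"
begin

lemma R_Y: "R \<subseteq> Y \<times> Y \<times> Y"
  using R_conj by auto

lemma pres_eq_fact_eq_padded:
  assumes "pres_eq Y R w1 w2" "set w1 \<subseteq> Y \<times> UNIV"
  shows "\<exists>b. \<forall>b'\<ge>b.
    fact_eq G (positive_word w1 @ compensator b' w1) (positive_word w2 @ compensator b' w2)"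
  using assms
proof (induction rule: pres_eq.induct)
  case (pres_refl w)
  show ?case by simp
next
  case (pres_sym w1 w2)
  have "set w1 \<subseteq> Y \<times> UNIV" using pres_eq_lists[OF pres_sym.hyps R_Y] pres_sym.prems by blast
  then obtain b where
    "\<forall>b'\<ge>b. fact_eq G (positive_word w1 @ compensator b' w1) (positive_word w2 @ compensator b' w2)"
    using pres_sym.IH by blast
  then show ?case by (blast intro: fact_eq_sym)
next
  case (pres_trans w1 w2 w3)
  have "set w2 \<subseteq> Y \<times> UNIV" using pres_eq_lists[OF pres_trans.hyps(1) R_Y] pres_trans.prems by blast
  then obtain b1 b2 where
    "\<forall>b'\<ge>b1. fact_eq G (positive_word w1 @ compensator b' w1) (positive_word w2 @ compensator b' w2)"
    "\<forall>b'\<ge>b2. fact_eq G (positive_word w2 @ compensator b' w2) (positive_word w3 @ compensator b' w3)"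
    using pres_trans by blast
  then have "\<forall>b'\<ge>max b1 b2.
      fact_eq G (positive_word w1 @ compensator b' w1) (positive_word w3 @ compensator b' w3)"
    using fact_eq_trans by (metis max.boundedE)
  then show ?case by blast
next
  case (pres_cancel y u e v)
  show ?case
    by (intro exI[of _ "length (u @ [(y, e), (y, \<not> e)] @ v)"] allI impI fact_eq_padded_cancel)
       (use pres_cancel in simp_all)
next
  case (pres_rel y y' z u v)
  then have "y \<in> Y" "z \<in> Y" "y' = inv z \<otimes> y \<otimes> z" using R_conj by auto
  then show ?case
    by (intro exI[of _ "length (u @ [(z, False), (y, True), (z, True)] @ v)"] allI impI)
       (use pres_rel.prems fact_eq_padded_conj in simp)
qed

lemma pres_eq_if_alpha_eq:
  assumes "set u1 \<subseteq> Y" "set u2 \<subseteq> Y" "alpha G u1 = alpha G u2"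
  shows "pres_eq Y R (map (\<lambda>y. (y, True)) u1) (map (\<lambda>y. (y, True)) u2)"
proof -
  have "map (\<lambda>y. (y, True)) u1 \<in> lists (Y \<times> UNIV)" "map (\<lambda>y. (y, True)) u2 \<in> lists (Y \<times> UNIV)"
    using assms(1,2) by auto
  moreover have "word_eval G (map (\<lambda>y. (y, True)) u1) = word_eval G (map (\<lambda>y. (y, True)) u2)"
    using assms(3) by (simp add: word_eval_positive)
  ultimately show ?thesis using presents unfolding presents_def by blast
qed

lemma fact_eq_padded_if_alpha_eq:
  assumes "set u1 \<subseteq> Y" "set u2 \<subseteq> Y" "alpha G u1 = alpha G u2"
  shows "\<exists>b. \<forall>b'\<ge>b. fact_eq G (u1 @ concat (map central_word (padding_letters b')))
    (u2 @ concat (map central_word (padding_letters b')))"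
proof -
  have "set (map (\<lambda>y. (y, True)) u1) \<subseteq> Y \<times> UNIV" using assms(1) by auto
  from pres_eq_fact_eq_padded[OF pres_eq_if_alpha_eq[OF assms] this] show ?thesis
    by (simp add: compensator_positive)
qed

definition class_balance :: "'a set \<Rightarrow> ('a \<times> bool) list \<Rightarrow> int" where
  "class_balance C w = sum_list (map (\<lambda>(y, e). if y \<in> C then (if e then 1 else -1) else 0) w)"

lemma class_balance_append [simp]: "class_balance C (u @ v) = class_balance C u + class_balance C v"
  by (simp add: class_balance_def)

lemma class_balance_Cons [simp]:
  "class_balance C ((y, e) # w) = (if y \<in> C then (if e then 1 else -1) else 0) + class_balance C w"
  by (simp add: class_balance_def)

lemma class_balance_Nil [simp]: "class_balance C [] = 0"
  by (simp add: class_balance_def)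

lemma class_balance_positive: "class_balance C (map (\<lambda>y. (y, True)) u) = int (tau C u)"
  by (induction u) auto

lemma pres_eq_class_balance:
  assumes "pres_eq Y R w1 w2" "x \<in> carrier G"
  shows "class_balance (conj_class G x) w1 = class_balance (conj_class G x) w2"
  using assms(1)
proof (induction rule: pres_eq.induct)
  case (pres_cancel y u e v)
  then show ?case by (cases e) auto
next
  case (pres_rel y y' z u v)
  then have "y \<in> carrier G" "z \<in> carrier G" "inv z \<otimes> y \<otimes> z = y'" using R_conj by auto
  then have "y' \<in> conj_class G x \<longleftrightarrow> y \<in> conj_class G x"
    using conj_mem_conj_class_iff[OF _ _ assms(2)] by blast
  then show ?case by auto
qed auto

lemma tau_eq_if_alpha_eq:
  assumes "set u1 \<subseteq> Y" "set u2 \<subseteq> Y" "alpha G u1 = alpha G u2" "x \<in> carrier G"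
  shows "tau (conj_class G x) u1 = tau (conj_class G x) u2"
  using pres_eq_class_balance[OF pres_eq_if_alpha_eq[OF assms(1-3)] assms(4)]
  by (simp add: class_balance_positive)

lemma exists_uniform_padding:
  "\<exists>B. \<forall>v1 v2. set v1 \<subseteq> Y \<and> set v2 \<subseteq> Y \<and> length v1 \<le> L \<and> length v2 \<le> L \<and> alpha G v1 = alpha G v2 \<longrightarrow>
    fact_eq G (v1 @ concat (map central_word (padding_letters B)))
      (v2 @ concat (map central_word (padding_letters B)))"
proof -
  let ?pad = "\<lambda>b. concat (map central_word (padding_letters b))"
  define V where "V = {v. set v \<subseteq> Y \<and> length v \<le> L}"
  define S where "S = {(v1, v2). v1 \<in> V \<and> v2 \<in> V \<and> alpha G v1 = alpha G v2}"
  have "finite V" unfolding V_def by (rule finite_lists_length_le[OF finite_Y])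
  moreover have "S \<subseteq> V \<times> V" unfolding S_def by auto
  ultimately have "finite S" using finite_subset by blast
  have "\<forall>p\<in>S. \<exists>b. \<forall>b'\<ge>b. fact_eq G (fst p @ ?pad b') (snd p @ ?pad b')"
    unfolding S_def V_def using fact_eq_padded_if_alpha_eq by auto
  then obtain f where f: "\<forall>p\<in>S. \<forall>b'\<ge>f p. fact_eq G (fst p @ ?pad b') (snd p @ ?pad b')"
    by (auto dest: bchoice)
  define B where "B = Max (f ` S)"
  have "fact_eq G (v1 @ ?pad B) (v2 @ ?pad B)" if "(v1, v2) \<in> S" for v1 v2
  proof -
    have "f (v1, v2) \<le> B" unfolding B_def using \<open>finite S\<close> that by simp
    then show ?thesis using f that by auto
  qed
  then show ?thesis unfolding S_def V_def by blast
qed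

theorem fact_eq_if_many_factors:
  "\<exists>T. \<forall>s1 s2. set s1 \<subseteq> Y \<and> set s2 \<subseteq> Y \<and>
     generate G (set s1) = carrier G \<and> generate G (set s2) = carrier G \<and>
     (\<forall>y\<in>Y. T \<le> tau (conj_class G y) s1) \<and> alpha G s1 = alpha G s2 \<longrightarrow> fact_eq G s1 s2"
proof -
  define M where "M = 2 * central_exp * card Y"
  define K where "K = M + central_exp"
  let ?cws = "\<lambda>ts. concat (map central_word ts)"
  obtain B where B: "\<And>v1 v2. \<lbrakk>set v1 \<subseteq> Y; set v2 \<subseteq> Y;
      length v1 \<le> card Y * K; length v2 \<le> card Y * K; alpha G v1 = alpha G v2\<rbrakk>
      \<Longrightarrow> fact_eq G (v1 @ ?cws (padding_letters B)) (v2 @ ?cws (padding_letters B))"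
    using exists_uniform_padding[of "card Y * K"] by blast
  define P where "P = padding_letters B"
  have P: "set P \<subseteq> Y" unfolding P_def by (rule padding_letters_Y)
  show ?thesis
  proof (intro exI[of _ "M + central_exp * length P"] allI impI)
    fix s1 s2
    assume "set s1 \<subseteq> Y \<and> set s2 \<subseteq> Y \<and> generate G (set s1) = carrier G \<and> generate G (set s2) = carrier G \<and>
      (\<forall>y\<in>Y. M + central_exp * length P \<le> tau (conj_class G y) s1) \<and> alpha G s1 = alpha G s2"
    then have s: "set s1 \<subseteq> Y" "set s2 \<subseteq> Y"
      "generate G (set s1) = carrier G" "generate G (set s2) = carrier G"
      "\<And>y. y \<in> Y \<Longrightarrow> M + central_exp * length P \<le> tau (conj_class G y) s1" "alpha G s1 = alpha G s2"
      by auto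
    obtain ts where "set ts \<subseteq> Y" and bounds: "\<forall>y\<in>Y.
        M + central_exp * tau (conj_class G y) (P @ ts) \<le> tau (conj_class G y) s1 \<and>
        tau (conj_class G y) s1 \<le> central_exp * tau (conj_class G y) (P @ ts) + K"
      using exists_central_prefix[OF s(5)] unfolding K_def by blast
    then have Pts: "set (P @ ts) \<subseteq> Y" using P by simp
    have "tau (conj_class G y) s2 = tau (conj_class G y) s1" if "y \<in> Y" for y
      using tau_eq_if_alpha_eq[OF s(2,1) s(6)[symmetric]] that by simp
    then have bounds2: "\<forall>y\<in>Y.
        M + central_exp * tau (conj_class G y) (P @ ts) \<le> tau (conj_class G y) s2 \<and>
        tau (conj_class G y) s2 \<le> central_exp * tau (conj_class G y) (P @ ts) + K"
      using bounds by simp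
    obtain u1 where u1: "fact_eq G s1 (?cws (P @ ts) @ u1)" "set u1 \<subseteq> Y" "length u1 \<le> card Y * K"
      "alpha G s1 = alpha G (?cws (P @ ts) @ u1)"
      using extract_central_words_bounded[OF s(1,3) Pts, of K] bounds unfolding M_def by blast
    obtain u2 where u2: "fact_eq G s2 (?cws (P @ ts) @ u2)" "set u2 \<subseteq> Y" "length u2 \<le> card Y * K"
      "alpha G s2 = alpha G (?cws (P @ ts) @ u2)"
      using extract_central_words_bounded[OF s(2,4) Pts, of K] bounds2 unfolding M_def by blast
    have "alpha G u1 = alpha G u2"
      by (rule alpha_append_cancel_left[of "?cws (P @ ts)"]) (use Pts u1 u2 s(6) in auto)
    then have "fact_eq G (u1 @ ?cws P) (u2 @ ?cws P)" using B u1(2,3) u2(2,3) unfolding P_def by blast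
    then have "fact_eq G (?cws (P @ ts) @ u1) (?cws (P @ ts) @ u2)"
      using fact_eq_cancel_padding P \<open>set ts \<subseteq> Y\<close> u1(2) u2(2) by blast
    then show "fact_eq G s1 s2" using u1(1) u2(1) by (blast intro: fact_eq_trans fact_eq_sym)
  qed
qed

end

lemma generate_eq_carrier_if_presents:
  assumes "group G" "Y \<subseteq> carrier G" "presents G Y R"
  shows "generate G Y = carrier G"
proof
  show "generate G Y \<subseteq> carrier G" using group.generate_incl[OF assms(1,2)] .
  show "carrier G \<subseteq> generate G Y"
  proof
    fix g assume "g \<in> carrier G"
    then obtain w where w: "w \<in> lists (Y \<times> UNIV)" "word_eval G w = g"
      using assms(3) unfolding presents_def by blast
    have "word_eval G w \<in> generate G Y" using w(1)
    proof (induction w)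
      case (Cons p w)
      then obtain y e where "p = (y, e)" "y \<in> Y" by auto
      then show ?case using Cons
        by (auto simp: word_eval_def intro: generate.eng generate.incl generate.inv)
    qed (simp add: word_eval_def generate.one)
    then show "g \<in> generate G Y" using w(2) by simp
  qed
qed

theorem theorem4p1:
  fixes G :: "('a, 'b) monoid_scheme" and Y :: "'a set"
  assumes "finite_C_group G Y"
  shows "\<exists>T :: nat. \<forall>s1 s2.
           s1 \<in> lists Y \<and> s2 \<in> lists Y \<and>
           G_sub G s1 = carrier G \<and> G_sub G s2 = carrier G \<and>
           (\<forall>C \<in> classes_of G Y. tau C s1 \<ge> T) \<and>
           alpha G s1 = alpha G s2
           \<longrightarrow> fact_eq G s1 s2"
proof -
  obtain R where group: "group G" and Y: "Y \<subseteq> carrier G" "finite Y"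
    and conj: "\<forall>g\<in>carrier G. \<forall>y\<in>Y. inv\<^bsub>G\<^esub> g \<otimes>\<^bsub>G\<^esub> y \<otimes>\<^bsub>G\<^esub> g \<in> Y"
    and R: "R \<subseteq> {(y, y', z). y \<in> Y \<and> y' \<in> Y \<and> z \<in> Y \<and> inv\<^bsub>G\<^esub> z \<otimes>\<^bsub>G\<^esub> y \<otimes>\<^bsub>G\<^esub> z = y'}"
    and pres: "presents G Y R"
    using assms unfolding finite_C_group_def by blast
  have "conj_generated G Y"
    using group Y conj generate_eq_carrier_if_presents[OF group Y(1) pres]
    by (intro conj_generated.intro conj_generated_axioms.intro) auto
  then interpret C_group G Y R
    using R pres by (intro C_group.intro C_group_axioms.intro)
  show ?thesis
    using fact_eq_if_many_factors unfolding G_sub_def classes_of_def by (auto simp: lists_eq_set)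
qed

end
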